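(* Let $E/\mathbb{Q}(j_{K,f})$ be an elliptic curve with CM by $\mathcal{O}_{K,f}$, $j_{K,f}\neq0,1728$, with a standard compatible choice of bases. Suppose $M,M'\ge2$ are both adelic levels of definition for $E$, and let $d=\gcd(M,M')$. If $d\ge3$ then $d$ is an adelic level of definition for $E$; if $d=2$ then $4$ is an adelic level of definition for $E$.
   Context: $\delta,\phi$: $\delta=\Delta_Kf^2/4,\phi=0$ if $\Delta_Kf^2\equiv0\pmod4$, else $\delta=(\Delta_K-1)f^2/4,\phi=f$. $\mathcal{N}_{\delta,\phi}(R)=\langle\mathcal{C}_{\delta,\phi}(R),\begin{pmatrix}1&0\\-\phi&-1\end{pmatrix}\rangle$ with $\mathcal{C}_{\delta,\phi}(R)$ the invertible matrices $\begin{pmatrix}a+b\phi&b\\ \delta b&a\end{pmatrix}$, $a,b\in R$. Standard bases: a compatible system making $G_E=\rho_E(\operatorname{Gal}(\overline{F}/F))\subseteq\mathcal{N}_{\delta,\phi}(\widehat{\mathbb{Z}})$, $F=\mathbb{Q}(j_{K,f})$, with $G_{E,N}=\pi_N(G_E)$ ($\pi_N$ reduction mod $N$). $N$ is an adelic level of definition if $G_E=\pi_N^{-1}(\pi_N(G_E))$. *)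

theory Defs
  imports "HOL-Computational_Algebra.Computational_Algebra"
begin

text \<open>Profinite integers and 2x2 matrices over them, realised as compatible
  systems of residues modulo every n > 0 (the inverse limit of Z/nZ).
  A 2x2 integer matrix [[a,b],[c,d]] is encoded as the tuple (a,b,c,d).\<close>

type_synonym m2 = "int \<times> int \<times> int \<times> int"

definition m2mod :: "nat \<Rightarrow> m2 \<Rightarrow> m2" where
  "m2mod n A = (case A of (a,b,c,d) \<Rightarrow>
     (a mod int n, b mod int n, c mod int n, d mod int n))"

definition m2mult :: "m2 \<Rightarrow> m2 \<Rightarrow> m2" where
  "m2mult A B = (case A of (a,b,c,d) \<Rightarrow> case B of (e,f,g,h) \<Rightarrow>
     (a*e + b*g, a*f + b*h, c*e + d*g, c*f + d*h))"

definition m2det :: "m2 \<Rightarrow> int" where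
  "m2det A = (case A of (a,b,c,d) \<Rightarrow> a*d - b*c)"

definition zhat :: "(nat \<Rightarrow> int) set" where
  "zhat = {x. x 0 = 0 \<and> (\<forall>n>0. x n = x n mod int n) \<and>
              (\<forall>m n. 0 < m \<longrightarrow> 0 < n \<longrightarrow> m dvd n \<longrightarrow> x m = x n mod int m)}"

definition M2hat :: "(nat \<Rightarrow> m2) set" where
  "M2hat = {g. g 0 = (0,0,0,0) \<and> (\<forall>n>0. g n = m2mod n (g n)) \<and>
              (\<forall>m n. 0 < m \<longrightarrow> 0 < n \<longrightarrow> m dvd n \<longrightarrow> g m = m2mod m (g n))}"

definition GL2hat :: "(nat \<Rightarrow> m2) set" where
  "GL2hat = {g \<in> M2hat. \<forall>n>0. coprime (m2det (g n)) (int n)}"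

definition hmult :: "(nat \<Rightarrow> m2) \<Rightarrow> (nat \<Rightarrow> m2) \<Rightarrow> (nat \<Rightarrow> m2)" where
  "hmult g h = (\<lambda>n. if n = 0 then (0,0,0,0) else m2mod n (m2mult (g n) (h n)))"

definition hone :: "nat \<Rightarrow> m2" where
  "hone = (\<lambda>n. if n = 0 then (0,0,0,0) else m2mod n (1,0,0,1))"

definition piN :: "nat \<Rightarrow> (nat \<Rightarrow> m2) \<Rightarrow> m2" where
  "piN N g = g N"

definition delta_of :: "int \<Rightarrow> int \<Rightarrow> int" where
  "delta_of D f = (if (D * f^2) mod 4 = 0 then D * f^2 div 4 else (D - 1) * f^2 div 4)"

definition phi_of :: "int \<Rightarrow> int \<Rightarrow> int" where
  "phi_of D f = (if (D * f^2) mod 4 = 0 then 0 else f)"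

definition Cartan_hat :: "int \<Rightarrow> int \<Rightarrow> (nat \<Rightarrow> m2) set" where
  "Cartan_hat \<delta> \<phi> = {g \<in> GL2hat. \<exists>a\<in>zhat. \<exists>b\<in>zhat.
      \<forall>n>0. g n = m2mod n (a n + b n * \<phi>, b n, \<delta> * b n, a n)}"

definition sigma_hat :: "int \<Rightarrow> nat \<Rightarrow> m2" where
  "sigma_hat \<phi> = (\<lambda>n. if n = 0 then (0,0,0,0) else m2mod n (1, 0, -\<phi>, -1))"

inductive_set gen_subgroup :: "(nat \<Rightarrow> m2) set \<Rightarrow> (nat \<Rightarrow> m2) set" for S where
  gen_base: "g \<in> S \<Longrightarrow> g \<in> gen_subgroup S"
| gen_one: "hone \<in> gen_subgroup S"
| gen_mult: "g \<in> gen_subgroup S \<Longrightarrow> h \<in> gen_subgroup S \<Longrightarrow> hmult g h \<in> gen_subgroup S"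
| gen_inv: "g \<in> gen_subgroup S \<Longrightarrow> h \<in> GL2hat \<Longrightarrow> hmult g h = hone \<Longrightarrow> h \<in> gen_subgroup S"

definition Normalizer_hat :: "int \<Rightarrow> int \<Rightarrow> (nat \<Rightarrow> m2) set" where
  "Normalizer_hat \<delta> \<phi> = gen_subgroup (Cartan_hat \<delta> \<phi> \<union> {sigma_hat \<phi>})"

definition closed_subgroup_hat :: "(nat \<Rightarrow> m2) set \<Rightarrow> bool" where
  "closed_subgroup_hat G \<longleftrightarrow> G \<subseteq> GL2hat \<and> hone \<in> G \<and>
     (\<forall>g\<in>G. \<forall>h\<in>G. hmult g h \<in> G) \<and> (\<forall>g\<in>G. \<exists>h\<in>G. hmult g h = hone) \<and>
     (\<forall>g\<in>GL2hat. (\<forall>n>0. \<exists>h\<in>G. h n = g n) \<longrightarrow> g \<in> G)"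

definition adelic_level :: "int \<Rightarrow> int \<Rightarrow> (nat \<Rightarrow> m2) set \<Rightarrow> nat \<Rightarrow> bool" where
  "adelic_level \<delta> \<phi> G N \<longleftrightarrow>
     G = {h \<in> Normalizer_hat \<delta> \<phi>. \<exists>g\<in>G. piN N h = piN N g}"

definition fundamental_discriminant :: "int \<Rightarrow> bool" where
  "fundamental_discriminant D \<longleftrightarrow> D \<noteq> 1 \<and>
     ((D mod 4 = 1 \<and> squarefree D) \<or>
      (D mod 4 = 0 \<and> (D div 4) mod 4 \<in> {2,3} \<and> squarefree (D div 4)))"

end

theory Submission
  imports Defs "HOL-Number_Theory.Cong"
begin

text \<open>An element k of the normalizer that is trivial modulo e > 2 lies in the Cartan subgroup,
  since the elements sigma c of the non-trivial coset have trace 0. Let d = gcd M M' divide e and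
  write M = A d, M' = B d with A, B coprime. If t is 0 modulo A and 1 modulo B, the powers t^(n!)
  define an idempotent epsilon of Zhat which is 0 modulo A and 1 modulo B, and since k is 1 modulo
  d, the Cartan element k1 = 1 + epsilon (k - 1) is 1 modulo M and agrees with k modulo M'. As M
  and M' are levels, first k1 and then k1^-1 k lie in G, so k does: e is a level. Take e = d, or
  e = 4 when d = 2.\<close>

section \<open>Idempotents of the profinite integers\<close>

lemma cong_power_periodic:
  fixes t :: int
  assumes "[t ^ i = t ^ j] (mod m)" and "i \<le> j" and "i \<le> n"
  shows "[t ^ (n + c * (j - i)) = t ^ n] (mod m)"
proof (induction c)
  case 0
  then show ?case by simp
next
  case (Suc c)
  obtain p where p: "j = i + p" using assms(2) le_Suc_ex by blast
  have "n + Suc c * (j - i) = (n + c * (j - i) - i) + j" using assms(3) p by simp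
  then have "t ^ (n + Suc c * (j - i)) = t ^ (n + c * (j - i) - i) * t ^ j"
    by (simp add: power_add[symmetric])
  also have "[\<dots> = t ^ (n + c * (j - i) - i) * t ^ i] (mod m)"
    using assms(1) by (intro cong_mult cong_refl) (rule cong_sym)
  also have "t ^ (n + c * (j - i) - i) * t ^ i = t ^ (n + c * (j - i))"
    using assms(3) by (simp add: power_add[symmetric])
  finally show ?case using Suc.IH by (rule cong_trans)
qed

text \<open>Two of the powers t^0, ..., t^m agree modulo m, so the powers of t are periodic
  modulo m from an exponent at most m on, with period at most m; m! absorbs both bounds.\<close>
lemma cong_power_fact_idem:
  fixes t :: int and m :: nat
  assumes "m > 0"
  shows "[t ^ fact m * t ^ fact m = t ^ fact m] (mod int m)"
proof -
  let ?f = "\<lambda>i. t ^ i mod int m"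
  have "?f ` {0..m} \<subseteq> {0..<int m}" using assms by auto
  then have "card (?f ` {0..m}) < card {0..m}"
    by (metis card_atLeastAtMost card_atLeastLessThan_int card_mono finite_atLeastLessThan_int
        diff_zero le_imp_less_Suc nat_int)
  then obtain i j where ij: "i < j" "j \<le> m" "[t ^ i = t ^ j] (mod int m)"
    using pigeonhole[of ?f "{0..m}"] unfolding inj_on_def cong_def
    by (metis atLeastAtMost_iff linorder_neqE_nat)
  have "j - i dvd fact m" using ij by (intro dvd_fact) auto
  then obtain c where c: "fact m = c * (j - i)" by (metis dvd_def mult.commute)
  have "i \<le> fact m" using ij fact_ge_self[of m] by linarith
  then have "[t ^ (fact m + c * (j - i)) = t ^ fact m] (mod int m)"
    using ij by (intro cong_power_periodic) auto
  then show ?thesis by (simp add: c power_add)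
qed

lemma cong_power_of_idem:
  fixes x :: int
  assumes "[x * x = x] (mod m)" and "j > 0"
  shows "[x ^ j = x] (mod m)"
  using assms(2)
proof (induction j rule: nat_induct_non_zero)
  case 1
  then show ?case by simp
next
  case (Suc j)
  then have "[x * x ^ j = x * x] (mod m)" by (intro cong_mult cong_refl)
  then show ?case using assms(1) by (simp add: cong_trans)
qed

definition compatible_residues :: "(nat \<Rightarrow> int) \<Rightarrow> bool" where
  "compatible_residues x \<longleftrightarrow>
     (\<forall>m n. 0 < m \<longrightarrow> 0 < n \<longrightarrow> m dvd n \<longrightarrow> [x n = x m] (mod int m))"

lemma compatible_residuesD:
  "compatible_residues x \<Longrightarrow> 0 < m \<Longrightarrow> 0 < n \<Longrightarrow> m dvd n \<Longrightarrow> [x n = x m] (mod int m)"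
  unfolding compatible_residues_def by blast

lemma compatible_residues_power_fact: "compatible_residues (\<lambda>n. t ^ fact n)"
  unfolding compatible_residues_def
proof (intro allI impI)
  fix m n :: nat assume mn: "0 < m" "0 < n" "m dvd n"
  then have "(fact m :: nat) dvd fact n" by (intro fact_dvd dvd_imp_le)
  then obtain j where j: "(fact n :: nat) = fact m * j" by blast
  then have "j > 0" by (cases j) auto
  have "[(t ^ fact m) ^ j = t ^ fact m] (mod int m)"
    using cong_power_fact_idem[OF mn(1)] \<open>j > 0\<close> by (rule cong_power_of_idem)
  then show "[t ^ fact n = t ^ fact m] (mod int m)" by (simp add: j power_mult)
qed

lemma zhat_of_compatible_residues:
  assumes "compatible_residues x"
  shows "(\<lambda>n. if n = 0 then 0 else x n mod int n) \<in> zhat"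
  unfolding zhat_def
proof (intro CollectI conjI allI impI)
  fix m n :: nat assume mn: "0 < m" "0 < n" "m dvd n"
  then have "x n mod int n mod int m = x m mod int m"
    using compatible_residuesD[OF assms mn] by (simp add: mod_mod_cancel cong_def)
  then show "(if m = 0 then 0 else x m mod int m) =
      (if n = 0 then 0 else x n mod int n) mod int m" using mn by simp
qed simp_all

section \<open>Integer 2x2 matrices modulo n\<close>

definition m2one :: m2 where
  "m2one = (1, 0, 0, 1)"

definition m2smult :: "int \<Rightarrow> m2 \<Rightarrow> m2" where
  "m2smult u A = (case A of (a,b,c,d) \<Rightarrow> (u*a, u*b, u*c, u*d))"

definition m2adj :: "m2 \<Rightarrow> m2" where
  "m2adj A = (case A of (a,b,c,d) \<Rightarrow> (d, -b, -c, a))"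

lemma mod_mult_mod_add_eq: "((a::int) mod n * b + c mod n * d) mod n = (a*b + c*d) mod n"
  by (metis mod_add_eq mod_mult_left_eq)

lemma mod_add_mult_mod_eq: "((a::int) * (b mod n) + c * (d mod n)) mod n = (a*b + c*d) mod n"
  by (metis mod_add_eq mod_mult_right_eq)

lemma m2mod_m2mult_mod_left: "m2mod n (m2mult (m2mod n X) Y) = m2mod n (m2mult X Y)"
  by (cases X rule: prod_cases4; cases Y rule: prod_cases4)
    (simp add: m2mod_def m2mult_def mod_mult_mod_add_eq)

lemma m2mod_m2mult_mod_right: "m2mod n (m2mult X (m2mod n Y)) = m2mod n (m2mult X Y)"
  by (cases X rule: prod_cases4; cases Y rule: prod_cases4)
    (simp add: m2mod_def m2mult_def mod_add_mult_mod_eq)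

lemma m2mod_m2mod: "m dvd n \<Longrightarrow> m2mod m (m2mod n X) = m2mod m X"
  by (cases X rule: prod_cases4) (simp add: m2mod_def mod_mod_cancel)

lemma m2mod_idem [simp]: "m2mod n (m2mod n X) = m2mod n X"
  by (simp add: m2mod_m2mod)

lemma m2mod_eq_iff:
  "m2mod n (a,b,c,d) = m2mod n (a',b',c',d') \<longleftrightarrow>
     int n dvd a - a' \<and> int n dvd b - b' \<and> int n dvd c - c' \<and> int n dvd d - d'"
  by (simp add: m2mod_def mod_eq_dvd_iff)

lemma m2mult_assoc: "m2mult (m2mult X Y) Z = m2mult X (m2mult Y Z)"
  by (cases X rule: prod_cases4; cases Y rule: prod_cases4; cases Z rule: prod_cases4)
    (simp add: m2mult_def algebra_simps)

lemma m2mult_one_left [simp]: "m2mult m2one X = X"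
  by (cases X rule: prod_cases4) (simp add: m2mult_def m2one_def)

lemma m2mult_one_right [simp]: "m2mult X m2one = X"
  by (cases X rule: prod_cases4) (simp add: m2mult_def m2one_def)

lemma m2det_m2mod: "m2det (m2mod n X) mod int n = m2det X mod int n"
proof -
  have "(a mod int n * (d mod int n) - b mod int n * (c mod int n)) mod int n =
      (a * d - b * c) mod int n" for a b c d
    by (metis mod_diff_eq mod_mult_eq)
  then show ?thesis by (cases X rule: prod_cases4) (simp add: m2mod_def m2det_def)
qed

lemma coprime_m2det_m2mod_iff: "coprime (m2det (m2mod n X)) (int n) \<longleftrightarrow> coprime (m2det X) (int n)"
  by (metis coprime_mod_left_iff m2det_m2mod of_nat_0_eq_iff mod_by_0)

lemma m2det_m2mult: "m2det (m2mult X Y) = m2det X * m2det Y"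
  by (cases X rule: prod_cases4; cases Y rule: prod_cases4)
    (simp add: m2mult_def m2det_def algebra_simps)

lemma m2det_m2one [simp]: "m2det m2one = 1"
  by (simp add: m2det_def m2one_def)

lemma m2mult_adj_left: "m2mult (m2adj X) X = m2smult (m2det X) m2one"
  by (cases X rule: prod_cases4)
    (simp add: m2mult_def m2det_def m2adj_def m2smult_def m2one_def algebra_simps)

lemma m2mult_smult_left: "m2mult (m2smult u X) Y = m2smult u (m2mult X Y)"
  by (cases X rule: prod_cases4; cases Y rule: prod_cases4)
    (simp add: m2mult_def m2smult_def algebra_simps)

lemma m2smult_m2smult: "m2smult u (m2smult v X) = m2smult (u * v) X"
  by (cases X rule: prod_cases4) (simp add: m2smult_def algebra_simps)

lemma m2smult_one [simp]: "m2smult 1 X = X"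
  by (cases X rule: prod_cases4) (simp add: m2smult_def)

lemma m2mod_m2smult_mod_scalar: "m2mod n (m2smult (u mod int n) X) = m2mod n (m2smult u X)"
  by (cases X rule: prod_cases4) (simp add: m2mod_def m2smult_def mod_simps)

lemma m2mod_m2smult_mod: "m2mod n (m2smult u (m2mod n X)) = m2mod n (m2smult u X)"
  by (cases X rule: prod_cases4) (simp add: m2mod_def m2smult_def mod_simps)

lemma m2mod_m2smult_adj_mod: "m2mod n (m2smult u (m2adj (m2mod n X))) = m2mod n (m2smult u (m2adj X))"
proof -
  have "(- (u * (b mod int n))) mod int n = (- (u * b)) mod int n" for b
    by (metis mod_minus_eq mod_mult_right_eq)
  then show ?thesis
    by (cases X rule: prod_cases4) (simp add: m2mod_def m2smult_def m2adj_def mod_simps)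
qed

lemma m2det_cong_one_of_inverse:
  assumes "m2mod n (m2mult X Y) = m2mod n m2one"
  shows "[m2det Y * m2det X = 1] (mod int n)"
proof -
  have "m2det (m2mod n (m2mult X Y)) mod int n = m2det (m2mod n m2one) mod int n"
    by (simp add: assms)
  then show ?thesis by (simp add: m2det_m2mod m2det_m2mult mult.commute cong_def)
qed

lemma m2mod_smult_cong_one:
  assumes "[u = 1] (mod int n)"
  shows "m2mod n (m2smult u X) = m2mod n X"
  by (metis assms cong_def m2mod_m2smult_mod_scalar m2smult_one)

lemma m2mod_inverse_eq_adj:
  assumes "m2mod n (m2mult X Y) = m2mod n m2one"
  shows "m2mod n Y = m2mod n (m2smult (m2det Y) (m2adj X))"
proof -
  have "m2mod n (m2smult (m2det X) Y) = m2mod n (m2mult (m2adj X) (m2mult X Y))"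
    by (simp add: m2mult_assoc[symmetric] m2mult_adj_left m2mult_smult_left)
  also have "\<dots> = m2mod n (m2adj X)"
    by (metis assms m2mod_m2mult_mod_right m2mult_one_right)
  finally have adj: "m2mod n (m2smult (m2det X) Y) = m2mod n (m2adj X)" .
  have "m2mod n Y = m2mod n (m2smult (m2det Y * m2det X) Y)"
    using m2mod_smult_cong_one[OF m2det_cong_one_of_inverse[OF assms]] by simp
  also have "\<dots> = m2mod n (m2smult (m2det Y) (m2mod n (m2smult (m2det X) Y)))"
    by (simp add: m2mod_m2smult_mod m2smult_m2smult)
  also have "\<dots> = m2mod n (m2smult (m2det Y) (m2adj X))"
    by (simp add: adj m2mod_m2smult_mod)
  finally show ?thesis .
qed

lemma m2mod_inverse_commute:
  assumes "m2mod n (m2mult X Y) = m2mod n m2one"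
  shows "m2mod n (m2mult Y X) = m2mod n m2one"
proof -
  have "m2mod n (m2mult Y X) = m2mod n (m2mult (m2smult (m2det Y) (m2adj X)) X)"
    by (metis m2mod_inverse_eq_adj[OF assms] m2mod_m2mult_mod_left)
  also have "\<dots> = m2mod n (m2smult (m2det Y * m2det X) m2one)"
    by (simp add: m2mult_smult_left m2mult_adj_left m2smult_m2smult m2mult_assoc)
  also have "\<dots> = m2mod n m2one"
    using m2mod_smult_cong_one[OF m2det_cong_one_of_inverse[OF assms]] .
  finally show ?thesis .
qed

definition cartan_mat :: "int \<Rightarrow> int \<Rightarrow> int \<Rightarrow> int \<Rightarrow> m2" where
  "cartan_mat \<delta> \<phi> a b = (a + b * \<phi>, b, \<delta> * b, a)"

definition sigma_mat :: "int \<Rightarrow> m2" where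
  "sigma_mat \<phi> = (1, 0, -\<phi>, -1)"

definition cartan_mod :: "int \<Rightarrow> int \<Rightarrow> nat \<Rightarrow> m2 \<Rightarrow> bool" where
  "cartan_mod \<delta> \<phi> n X \<longleftrightarrow> (\<exists>a b. X = m2mod n (cartan_mat \<delta> \<phi> a b))"

definition normalizer_mod :: "int \<Rightarrow> int \<Rightarrow> nat \<Rightarrow> m2 \<Rightarrow> bool" where
  "normalizer_mod \<delta> \<phi> n X \<longleftrightarrow> cartan_mod \<delta> \<phi> n X \<or>
     (\<exists>a b. X = m2mod n (m2mult (sigma_mat \<phi>) (cartan_mat \<delta> \<phi> a b)))"

lemma cartan_mat_mult:
  "m2mult (cartan_mat \<delta> \<phi> a b) (cartan_mat \<delta> \<phi> c d) =
     cartan_mat \<delta> \<phi> (a*c + \<delta>*b*d) (a*d + b*c + \<phi>*b*d)"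
  by (simp add: m2mult_def cartan_mat_def algebra_simps)

lemma cartan_mat_mult_sigma:
  "m2mult (cartan_mat \<delta> \<phi> a b) (m2mult (sigma_mat \<phi>) X) =
     m2mult (sigma_mat \<phi>) (m2mult (cartan_mat \<delta> \<phi> (a + b*\<phi>) (-b)) X)"
  by (cases X rule: prod_cases4) (simp add: m2mult_def cartan_mat_def sigma_mat_def algebra_simps)

lemma sigma_mat_mult_sigma: "m2mult (sigma_mat \<phi>) (m2mult (sigma_mat \<phi>) X) = X"
  by (cases X rule: prod_cases4) (simp add: m2mult_def sigma_mat_def)

lemma cartan_mat_one: "cartan_mat \<delta> \<phi> 1 0 = m2one"
  by (simp add: cartan_mat_def m2one_def)

lemma m2adj_cartan_mat: "m2adj (cartan_mat \<delta> \<phi> a b) = cartan_mat \<delta> \<phi> (a + b*\<phi>) (-b)"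
  by (simp add: m2adj_def cartan_mat_def algebra_simps)

lemma m2adj_sigma_cartan_mat:
  "m2adj (m2mult (sigma_mat \<phi>) (cartan_mat \<delta> \<phi> a b)) =
     m2mult (sigma_mat \<phi>) (cartan_mat \<delta> \<phi> (-a) (-b))"
  by (simp add: m2adj_def m2mult_def sigma_mat_def cartan_mat_def algebra_simps)

lemma m2smult_cartan_mat: "m2smult u (cartan_mat \<delta> \<phi> a b) = cartan_mat \<delta> \<phi> (u*a) (u*b)"
  by (simp add: m2smult_def cartan_mat_def algebra_simps)

lemma m2smult_sigma_cartan_mat:
  "m2smult u (m2mult (sigma_mat \<phi>) (cartan_mat \<delta> \<phi> a b)) =
     m2mult (sigma_mat \<phi>) (cartan_mat \<delta> \<phi> (u*a) (u*b))"
  by (simp add: m2smult_def m2mult_def sigma_mat_def cartan_mat_def algebra_simps)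

lemma m2mod_cartan_mat_mod:
  "m2mod n (cartan_mat \<delta> \<phi> (a mod int n) (b mod int n)) = m2mod n (cartan_mat \<delta> \<phi> a b)"
proof -
  have "(a + b mod int n * \<phi>) mod int n = (a + b * \<phi>) mod int n"
    by (metis mod_add_right_eq mod_mult_left_eq)
  then show ?thesis by (simp add: cartan_mat_def m2mod_def mod_simps)
qed

lemma normalizer_mod_mult:
  assumes "normalizer_mod \<delta> \<phi> n X" and "normalizer_mod \<delta> \<phi> n Y"
  shows "normalizer_mod \<delta> \<phi> n (m2mod n (m2mult X Y))"
proof -
  let ?c = "cartan_mat \<delta> \<phi>" and ?s = "sigma_mat \<phi>"
  have prod: "\<exists>a b. m2mult X' Y' = ?c a b \<or> m2mult X' Y' = m2mult ?s (?c a b)"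
    if "X' = ?c a b \<or> X' = m2mult ?s (?c a b)" and "Y' = ?c c d \<or> Y' = m2mult ?s (?c c d)"
    for X' Y' a b c d
    using that
    by (elim disjE) (auto simp: m2mult_assoc cartan_mat_mult cartan_mat_mult_sigma sigma_mat_mult_sigma)
  from assms obtain X' Y' a b c d where X: "X = m2mod n X'" "X' = ?c a b \<or> X' = m2mult ?s (?c a b)"
    and Y: "Y = m2mod n Y'" "Y' = ?c c d \<or> Y' = m2mult ?s (?c c d)"
    unfolding normalizer_mod_def cartan_mod_def by metis
  have "m2mod n (m2mult X Y) = m2mod n (m2mult X' Y')"
    by (simp add: X(1) Y(1) m2mod_m2mult_mod_left m2mod_m2mult_mod_right)
  then show ?thesis
    using prod[OF X(2) Y(2)] unfolding normalizer_mod_def cartan_mod_def by metis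
qed

lemma normalizer_mod_inverse:
  assumes "normalizer_mod \<delta> \<phi> n X" and "m2mod n (m2mult X Y) = m2mod n m2one"
  shows "normalizer_mod \<delta> \<phi> n (m2mod n Y)"
proof -
  let ?c = "cartan_mat \<delta> \<phi>" and ?s = "sigma_mat \<phi>" and ?u = "m2det Y"
  have Y: "m2mod n Y = m2mod n (m2smult ?u (m2adj X'))" if "X = m2mod n X'" for X'
    using m2mod_inverse_eq_adj[OF assms(2)] that by (simp add: m2mod_m2smult_adj_mod)
  from assms(1) obtain a b where "X = m2mod n (?c a b) \<or> X = m2mod n (m2mult ?s (?c a b))"
    unfolding normalizer_mod_def cartan_mod_def by blast
  then have "m2mod n Y = m2mod n (?c (?u * (a + b*\<phi>)) (?u * -b)) \<or>
      m2mod n Y = m2mod n (m2mult ?s (?c (?u * -a) (?u * -b)))"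
    by (auto dest!: Y simp: m2adj_cartan_mat m2smult_cartan_mat m2adj_sigma_cartan_mat
        m2smult_sigma_cartan_mat)
  then show ?thesis unfolding normalizer_mod_def cartan_mod_def by metis
qed

lemma sigma_cartan_mod_neq_one:
  assumes "e > 2"
  shows "m2mod e (m2mult (sigma_mat \<phi>) (cartan_mat \<delta> \<phi> a b)) \<noteq> m2mod e m2one"
proof
  assume "m2mod e (m2mult (sigma_mat \<phi>) (cartan_mat \<delta> \<phi> a b)) = m2mod e m2one"
  then have "int e dvd a + \<phi>*b - 1" and "int e dvd -a - (1 + \<phi>*b)"
    by (simp_all add: m2mult_def sigma_mat_def cartan_mat_def m2one_def m2mod_eq_iff algebra_simps)
  then have "int e dvd (a + \<phi>*b - 1) + (-a - (1 + \<phi>*b))" by (rule dvd_add)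
  then have "int e dvd 2" by (simp add: algebra_simps)
  then have "e dvd 2" by presburger
  then show False using assms by (metis dvd_imp_le not_le zero_less_numeral)
qed

lemma hone_eq: "n > 0 \<Longrightarrow> hone n = m2mod n m2one"
  by (simp add: hone_def m2one_def)

lemma hmult_eq: "n > 0 \<Longrightarrow> hmult g h n = m2mod n (m2mult (g n) (h n))"
  by (simp add: hmult_def)

lemma M2hat_zero: "g \<in> M2hat \<Longrightarrow> g 0 = (0,0,0,0)"
  by (simp add: M2hat_def)

lemma M2hat_m2mod: "g \<in> M2hat \<Longrightarrow> n > 0 \<Longrightarrow> m2mod n (g n) = g n"
  unfolding M2hat_def by (metis (mono_tags, lifting) mem_Collect_eq)

lemma M2hat_dvd: "g \<in> M2hat \<Longrightarrow> 0 < m \<Longrightarrow> 0 < n \<Longrightarrow> m dvd n \<Longrightarrow> g m = m2mod m (g n)"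
  unfolding M2hat_def by blast

lemma GL2hat_M2hat: "g \<in> GL2hat \<Longrightarrow> g \<in> M2hat"
  by (simp add: GL2hat_def)

lemma hmult_assoc: "hmult g (hmult h k) = hmult (hmult g h) k"
proof
  fix n
  show "hmult g (hmult h k) n = hmult (hmult g h) k n"
    by (cases "n = 0")
      (simp_all add: hmult_def m2mod_m2mult_mod_left m2mod_m2mult_mod_right m2mult_assoc)
qed

lemma hone_hmult: "x \<in> M2hat \<Longrightarrow> hmult hone x = x"
  by (rule ext) (simp add: hmult_def hone_eq m2mod_m2mult_mod_left M2hat_m2mod M2hat_zero)

lemma hmult_eq_hone_commute:
  assumes "hmult g h = hone"
  shows "hmult h g = hone"
proof
  fix n
  show "hmult h g n = hone n"
  proof (cases "n = 0")
    case False
    then have "m2mod n (m2mult (g n) (h n)) = m2mod n m2one"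
      using assms by (metis hmult_eq hone_eq neq0_conv)
    then show ?thesis
      using False by (simp add: hmult_eq hone_eq m2mod_inverse_commute)
  qed (simp add: hmult_def hone_def)
qed

lemma M2hat_hmult:
  assumes "g \<in> M2hat" and "h \<in> M2hat"
  shows "hmult g h \<in> M2hat"
  unfolding M2hat_def
proof (intro CollectI conjI allI impI)
  fix m n :: nat assume mn: "0 < m" "0 < n" "m dvd n"
  have "m2mod m (hmult g h n) = m2mod m (m2mult (m2mod m (g n)) (m2mod m (h n)))"
    using mn by (simp add: hmult_eq m2mod_m2mod m2mod_m2mult_mod_left m2mod_m2mult_mod_right)
  then show "hmult g h m = m2mod m (hmult g h n)"
    using mn by (simp add: hmult_eq M2hat_dvd[OF assms(1) mn] M2hat_dvd[OF assms(2) mn])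
qed (simp_all add: hmult_def)

lemma GL2hat_hmult: "g \<in> GL2hat \<Longrightarrow> h \<in> GL2hat \<Longrightarrow> hmult g h \<in> GL2hat"
  unfolding GL2hat_def
  by (auto simp: M2hat_hmult hmult_eq coprime_m2det_m2mod_iff m2det_m2mult)

lemma const_m2mod_GL2hat:
  assumes "m2det X = 1 \<or> m2det X = -1"
  shows "(\<lambda>n. if n = 0 then (0,0,0,0) else m2mod n X) \<in> GL2hat"
  using assms unfolding GL2hat_def M2hat_def
  by (auto simp: m2mod_m2mod coprime_m2det_m2mod_iff)

lemma hone_GL2hat: "hone \<in> GL2hat"
  using const_m2mod_GL2hat[of m2one] unfolding hone_def m2one_def m2det_def by simp

lemma sigma_hat_GL2hat: "sigma_hat \<phi> \<in> GL2hat"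
  using const_m2mod_GL2hat[of "(1, 0, -\<phi>, -1)"] by (simp add: sigma_hat_def m2det_def)

section \<open>The normalizer of the Cartan subgroup\<close>

lemma Normalizer_hat_hmult:
  "x \<in> Normalizer_hat \<delta> \<phi> \<Longrightarrow> y \<in> Normalizer_hat \<delta> \<phi> \<Longrightarrow> hmult x y \<in> Normalizer_hat \<delta> \<phi>"
  unfolding Normalizer_hat_def by (rule gen_subgroup.gen_mult)

lemma Cartan_hat_subset_Normalizer_hat: "Cartan_hat \<delta> \<phi> \<subseteq> Normalizer_hat \<delta> \<phi>"
  unfolding Normalizer_hat_def by (auto intro: gen_subgroup.gen_base)

lemma Normalizer_hat_normalizer_mod:
  assumes "x \<in> Normalizer_hat \<delta> \<phi>"
  shows "x \<in> GL2hat \<and> (\<forall>n>0. normalizer_mod \<delta> \<phi> n (x n))"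
  using assms unfolding Normalizer_hat_def
proof (induction rule: gen_subgroup.induct)
  case (gen_base g)
  then show ?case
  proof
    assume "g \<in> Cartan_hat \<delta> \<phi>"
    then show ?thesis
      unfolding Cartan_hat_def normalizer_mod_def cartan_mod_def cartan_mat_def by blast
  next
    assume "g \<in> {sigma_hat \<phi>}"
    moreover have "sigma_hat \<phi> n = m2mod n (m2mult (sigma_mat \<phi>) (cartan_mat \<delta> \<phi> 1 0))"
      if "n > 0" for n
      using that by (simp add: sigma_hat_def cartan_mat_one sigma_mat_def)
    ultimately show ?thesis
      using sigma_hat_GL2hat unfolding normalizer_mod_def by blast
  qed
next
  case gen_one
  then show ?case
    using hone_GL2hat unfolding normalizer_mod_def cartan_mod_def
    by (metis cartan_mat_one hone_eq)
next
  case (gen_mult g h)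
  then show ?case by (simp add: GL2hat_hmult hmult_eq normalizer_mod_mult)
next
  case (gen_inv g h)
  have "normalizer_mod \<delta> \<phi> n (h n)" if "n > 0" for n
  proof -
    have "m2mod n (m2mult (g n) (h n)) = m2mod n m2one"
      using gen_inv.hyps(3) that by (metis hmult_eq hone_eq)
    then show ?thesis
      using gen_inv.IH that normalizer_mod_inverse M2hat_m2mod[OF GL2hat_M2hat[OF gen_inv.hyps(2)]]
      by metis
  qed
  then show ?case using gen_inv.hyps(2) by blast
qed

lemma Normalizer_hat_cartan_mod_of_kernel:
  assumes "k \<in> Normalizer_hat \<delta> \<phi>" and "e > 2" and "k e = hone e" and "n > 0"
  shows "cartan_mod \<delta> \<phi> n (k n)"
proof -
  have kM: "k \<in> M2hat" and ne: "normalizer_mod \<delta> \<phi> (n * e) (k (n * e))"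
    using Normalizer_hat_normalizer_mod[OF assms(1)] assms(2,4) GL2hat_M2hat by auto
  have reduce: "k m = m2mod m (k (n * e))" if "m = n \<or> m = e" for m
    using that assms(2,4) by (intro M2hat_dvd[OF kM]) auto
  have "m2mod e (k (n * e)) = m2mod e m2one"
    using assms(2,3) reduce[of e] by (simp add: hone_eq)
  then have "m2mod e (k (n * e)) \<noteq> m2mod e (m2mult (sigma_mat \<phi>) (cartan_mat \<delta> \<phi> a b))" for a b
    using sigma_cartan_mod_neq_one[OF assms(2)] by metis
  then have "cartan_mod \<delta> \<phi> (n * e) (k (n * e))"
    using ne unfolding normalizer_mod_def by (metis dvd_triv_right m2mod_m2mod)
  then show ?thesis
    unfolding cartan_mod_def reduce[of n, simplified] by (metis dvd_triv_left m2mod_m2mod)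
qed

section \<open>Interpolating Cartan elements\<close>

lemma M2hat_cartan_coords:
  assumes "k \<in> M2hat" and "\<forall>n>0. cartan_mod \<delta> \<phi> n (k n)"
  obtains W Y where "compatible_residues W" and "compatible_residues Y"
    and "\<forall>n>0. k n = m2mod n (cartan_mat \<delta> \<phi> (W n) (Y n))"
proof -
  define W where "W n = snd (snd (snd (k n)))" for n
  define Y where "Y n = fst (snd (k n))" for n
  have "k n = m2mod n (cartan_mat \<delta> \<phi> (W n) (Y n))" if "n > 0" for n
  proof -
    from assms(2) that have "cartan_mod \<delta> \<phi> n (k n)" by simp
    then obtain a b where ab: "k n = m2mod n (cartan_mat \<delta> \<phi> a b)"
      unfolding cartan_mod_def by blast
    then have "W n = a mod int n" "Y n = b mod int n"
      by (simp_all add: W_def Y_def m2mod_def cartan_mat_def)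
    then show ?thesis by (simp add: ab m2mod_cartan_mat_mod)
  qed
  moreover have "[W n = W m] (mod int m) \<and> [Y n = Y m] (mod int m)"
    if "0 < m" "0 < n" "m dvd n" for m n
    using M2hat_dvd[OF assms(1) that]
    by (cases "k n" rule: prod_cases4) (simp add: m2mod_def W_def Y_def cong_def)
  then have "compatible_residues W" "compatible_residues Y"
    unfolding compatible_residues_def by blast+
  ultimately show thesis using that by blast
qed

lemma Cartan_hat_of_compatible_residues:
  assumes "compatible_residues a" and "compatible_residues b"
    and "\<forall>n>0. coprime (m2det (cartan_mat \<delta> \<phi> (a n) (b n))) (int n)"
  shows "(\<lambda>n. if n = 0 then (0,0,0,0) else m2mod n (cartan_mat \<delta> \<phi> (a n) (b n))) \<in> Cartan_hat \<delta> \<phi>"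
    (is "?k \<in> _")
proof -
  let ?a = "\<lambda>n. if n = 0 then 0 else a n mod int n"
  let ?b = "\<lambda>n. if n = 0 then 0 else b n mod int n"
  have k: "?k n = m2mod n (cartan_mat \<delta> \<phi> (?a n) (?b n))" if "n > 0" for n
    using that by (simp add: m2mod_cartan_mat_mod)
  have "?k \<in> M2hat"
    unfolding M2hat_def
  proof (intro CollectI conjI allI impI)
    fix m n :: nat assume mn: "0 < m" "0 < n" "m dvd n"
    have "m2mod m (?k n) = m2mod m (cartan_mat \<delta> \<phi> (a n mod int m) (b n mod int m))"
      using mn by (simp add: m2mod_m2mod m2mod_cartan_mat_mod)
    also have "\<dots> = ?k m"
      using mn compatible_residuesD[OF assms(1) mn] compatible_residuesD[OF assms(2) mn]
      by (simp add: cong_def m2mod_cartan_mat_mod)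
    finally show "?k m = m2mod m (?k n)" by simp
  qed simp_all
  moreover have "?k \<in> GL2hat"
    using \<open>?k \<in> M2hat\<close> assms(3) by (simp add: GL2hat_def coprime_m2det_m2mod_iff)
  moreover have "\<forall>n>0. ?k n = m2mod n (?a n + ?b n * \<phi>, ?b n, \<delta> * ?b n, ?a n)"
    using k by (simp add: cartan_mat_def)
  ultimately show ?thesis
    unfolding Cartan_hat_def mem_Collect_eq
    by (intro conjI bexI[OF _ zhat_of_compatible_residues[OF assms(1)]]
        bexI[OF _ zhat_of_compatible_residues[OF assms(2)]])
qed

lemma coprime_idempotent_blend:
  fixes e D n :: int
  assumes "[e * e = e] (mod n)" and "coprime D n"
  shows "coprime (e * D + 1 - e) n"
proof -
  obtain D' where "[D * D' = 1] (mod n)" using cong_solve_coprime_int[OF assms(2)] by blast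
  then have "n dvd (e * e - e) * (D * D' - D - D' + 1) + e * (D * D' - 1)"
    using assms(1) by (simp add: cong_iff_dvd_diff)
  then have "[(e * D + 1 - e) * (e * D' + 1 - e) = 1] (mod n)"
    by (simp add: cong_iff_dvd_diff algebra_simps)
  then show ?thesis using coprime_iff_invertible_int by blast
qed

lemma m2det_cartan_blend:
  "m2det (cartan_mat \<delta> \<phi> (1 + e * (W - 1)) (e * Y)) =
     e * m2det (cartan_mat \<delta> \<phi> W Y) + 1 - e + (e * e - e) * m2det (cartan_mat \<delta> \<phi> (W - 1) Y)"
  by (simp add: m2det_def cartan_mat_def algebra_simps)

lemma coprime_m2det_cartan_blend:
  assumes "[e * e = e] (mod int n)" and "coprime (m2det (cartan_mat \<delta> \<phi> W Y)) (int n)"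
  shows "coprime (m2det (cartan_mat \<delta> \<phi> (1 + e * (W - 1)) (e * Y))) (int n)"
proof -
  let ?D = "m2det (cartan_mat \<delta> \<phi> W Y)"
  have "[e * ?D + 1 - e = m2det (cartan_mat \<delta> \<phi> (1 + e * (W - 1)) (e * Y))] (mod int n)"
    using assms(1) unfolding m2det_cartan_blend by (simp add: cong_iff_dvd_diff)
  then show ?thesis using coprime_idempotent_blend[OF assms] cong_imp_coprime by blast
qed

lemma m2mod_cartan_blend:
  assumes "m2mod d (cartan_mat \<delta> \<phi> W Y) = m2mod d m2one" and "int A dvd e - s"
  shows "m2mod (A * d) (cartan_mat \<delta> \<phi> (1 + e * (W - 1)) (e * Y)) =
    m2mod (A * d) (cartan_mat \<delta> \<phi> (1 + s * (W - 1)) (s * Y))"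
proof -
  have "int d dvd W + Y * \<phi> - 1" "int d dvd Y" "int d dvd \<delta> * Y" "int d dvd W - 1"
    using assms(1) by (simp_all add: cartan_mat_def m2one_def m2mod_eq_iff)
  then have "int (A * d) dvd (e - s) * (W + Y * \<phi> - 1)" "int (A * d) dvd (e - s) * Y"
    "int (A * d) dvd (e - s) * (\<delta> * Y)" "int (A * d) dvd (e - s) * (W - 1)"
    using assms(2) by (auto intro: mult_dvd_mono)
  then show ?thesis
    by (simp add: cartan_mat_def m2mod_eq_iff algebra_simps)
qed

lemma Cartan_hat_interpolation:
  assumes k: "k \<in> GL2hat" "\<forall>n>0. cartan_mod \<delta> \<phi> n (k n)"
    and M: "M > 0" "M' > 0" and kd: "k (gcd M M') = hone (gcd M M')"
  shows "\<exists>k1 \<in> Cartan_hat \<delta> \<phi>. k1 M = hone M \<and> k1 M' = k M'"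
proof -
  define d where "d = gcd M M'"
  define A where "A = M div d"
  define B where "B = M' div d"
  have d: "d > 0" "d dvd M" "d dvd M'" using M by (simp_all add: d_def)
  have MA: "M = A * d" and MB: "M' = B * d" by (simp_all add: A_def B_def d_def)
  have "coprime (int A) (int B)"
    using div_gcd_coprime[of M M'] M by (simp add: A_def B_def d_def)
  then obtain t where t: "[t = 0] (mod int A)" "[t = 1] (mod int B)"
    using binary_chinese_remainder_int by blast
  obtain W Y where WY: "compatible_residues W" "compatible_residues Y"
    and kWY: "\<forall>n>0. k n = m2mod n (cartan_mat \<delta> \<phi> (W n) (Y n))"
    using M2hat_cartan_coords[OF GL2hat_M2hat[OF k(1)] k(2)] by blast
  define \<epsilon> where "\<epsilon> n = t ^ fact n" for n
  define Fa where "Fa n = 1 + \<epsilon> n * (W n - 1)" for n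
  define Fb where "Fb n = \<epsilon> n * Y n" for n
  define k1 where "k1 n = (if n = 0 then (0,0,0,0) else m2mod n (cartan_mat \<delta> \<phi> (Fa n) (Fb n)))" for n
  have "compatible_residues Fa" "compatible_residues Fb"
    using compatible_residuesD[OF compatible_residues_power_fact[of t]]
      compatible_residuesD[OF WY(1)] compatible_residuesD[OF WY(2)]
    unfolding compatible_residues_def Fa_def Fb_def \<epsilon>_def
    by (auto intro!: cong_add cong_mult cong_diff)
  moreover have "coprime (m2det (cartan_mat \<delta> \<phi> (Fa n) (Fb n))) (int n)" if "n > 0" for n
    unfolding Fa_def Fb_def
  proof (rule coprime_m2det_cartan_blend)
    show "[\<epsilon> n * \<epsilon> n = \<epsilon> n] (mod int n)"
      unfolding \<epsilon>_def using that by (rule cong_power_fact_idem)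
    show "coprime (m2det (cartan_mat \<delta> \<phi> (W n) (Y n))) (int n)"
    proof -
      have "coprime (m2det (k n)) (int n)" using k(1) that by (simp add: GL2hat_def)
      then show ?thesis using kWY that by (simp add: coprime_m2det_m2mod_iff)
    qed
  qed
  ultimately have "k1 \<in> Cartan_hat \<delta> \<phi>"
    unfolding k1_def by (intro Cartan_hat_of_compatible_residues) auto
  have kd': "m2mod d (cartan_mat \<delta> \<phi> (W m) (Y m)) = m2mod d m2one" if "m > 0" "d dvd m" for m
    using kd M2hat_dvd[OF GL2hat_M2hat[OF k(1)] d(1) that(1,2)] kWY that d(1)
    by (simp add: d_def hone_eq m2mod_m2mod)
  have "int A dvd \<epsilon> M - 0"
    using cong_pow[OF t(1), of "fact M"] by (simp add: \<epsilon>_def cong_iff_dvd_diff zero_power)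
  from m2mod_cartan_blend[OF kd'[OF M(1) d(2)] this, folded MA]
  have "k1 M = hone M" using M(1) by (simp add: k1_def Fa_def Fb_def cartan_mat_one hone_eq)
  moreover have "int B dvd \<epsilon> M' - 1"
    using cong_pow[OF t(2), of "fact M'"] by (simp add: \<epsilon>_def cong_iff_dvd_diff)
  from m2mod_cartan_blend[OF kd'[OF M(2) d(3)] this, folded MB]
  have "k1 M' = k M'" using M(2) kWY by (simp add: k1_def Fa_def Fb_def)
  ultimately show ?thesis using \<open>k1 \<in> Cartan_hat \<delta> \<phi>\<close> by blast
qed

section \<open>Adelic levels\<close>

lemma adelic_level_iff_kernel:
  assumes G: "closed_subgroup_hat G" "G \<subseteq> Normalizer_hat \<delta> \<phi>" and n: "n > 0"
  shows "adelic_level \<delta> \<phi> G n \<longleftrightarrow> (\<forall>k \<in> Normalizer_hat \<delta> \<phi>. k n = hone n \<longrightarrow> k \<in> G)"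
proof
  assume "adelic_level \<delta> \<phi> G n"
  then have eq: "{h \<in> Normalizer_hat \<delta> \<phi>. \<exists>g\<in>G. piN n h = piN n g} = G"
    unfolding adelic_level_def by (rule sym)
  have "hone \<in> G" using G(1) by (simp add: closed_subgroup_hat_def)
  show "\<forall>k \<in> Normalizer_hat \<delta> \<phi>. k n = hone n \<longrightarrow> k \<in> G"
  proof (intro ballI impI)
    fix k assume "k \<in> Normalizer_hat \<delta> \<phi>" "k n = hone n"
    then have "k \<in> {h \<in> Normalizer_hat \<delta> \<phi>. \<exists>g\<in>G. piN n h = piN n g}"
      using \<open>hone \<in> G\<close> by (auto simp: piN_def)
    then show "k \<in> G" by (simp only: eq)
  qed
next
  assume kernel: "\<forall>k \<in> Normalizer_hat \<delta> \<phi>. k n = hone n \<longrightarrow> k \<in> G"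
  have "h \<in> G" if h: "h \<in> Normalizer_hat \<delta> \<phi>" and g: "g \<in> G" "h n = g n" for h g
  proof -
    obtain g' where g': "g' \<in> G" "hmult g g' = hone"
      using G(1) g(1) unfolding closed_subgroup_hat_def by blast
    have "hmult g' h n = hmult g' g n" using n g(2) by (simp add: hmult_eq)
    then have "hmult g' h n = hone n" using hmult_eq_hone_commute[OF g'(2)] by simp
    moreover have "hmult g' h \<in> Normalizer_hat \<delta> \<phi>"
      using G(2) g'(1) h by (blast intro: Normalizer_hat_hmult)
    ultimately have "hmult g' h \<in> G" using kernel by blast
    then have "hmult g (hmult g' h) \<in> G"
      using G(1) g(1) unfolding closed_subgroup_hat_def by blast
    moreover have "h \<in> M2hat" using Normalizer_hat_normalizer_mod[OF h] GL2hat_M2hat by blast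
    ultimately show ?thesis by (simp add: hmult_assoc g'(2) hone_hmult)
  qed
  then show "adelic_level \<delta> \<phi> G n"
    unfolding adelic_level_def piN_def using G(2) by auto
qed

lemma adelic_level_of_gcd_dvd:
  assumes G: "closed_subgroup_hat G" "G \<subseteq> Normalizer_hat \<delta> \<phi>"
    and M: "M > 0" "M' > 0" "adelic_level \<delta> \<phi> G M" "adelic_level \<delta> \<phi> G M'"
    and e: "e > 2" "gcd M M' dvd e"
  shows "adelic_level \<delta> \<phi> G e"
proof -
  have kernel: "k \<in> G" if "k \<in> Normalizer_hat \<delta> \<phi>" "k N = hone N" "N = M \<or> N = M'" for k N
    using that adelic_level_iff_kernel[OF G M(1), THEN iffD1, OF M(3)]
      adelic_level_iff_kernel[OF G M(2), THEN iffD1, OF M(4)] by blast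
  have "k \<in> G" if kN: "k \<in> Normalizer_hat \<delta> \<phi>" and ke: "k e = hone e" for k
  proof -
    have kGL: "k \<in> GL2hat" using Normalizer_hat_normalizer_mod[OF kN] by blast
    have d: "gcd M M' > 0" using M(1) by simp
    then have "k (gcd M M') = m2mod (gcd M M') (k e)"
      using M2hat_dvd[OF GL2hat_M2hat[OF kGL] _ _ e(2)] e(1) by simp
    then have "k (gcd M M') = hone (gcd M M')"
      using ke d e by (simp add: hone_eq m2mod_m2mod)
    then obtain k1 where k1: "k1 \<in> Cartan_hat \<delta> \<phi>" "k1 M = hone M" "k1 M' = k M'"
      using Cartan_hat_interpolation[OF kGL _ M(1,2)]
        Normalizer_hat_cartan_mod_of_kernel[OF kN e(1) ke] by blast
    have k1G: "k1 \<in> G"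
      using kernel[of k1 M] k1(1,2) Cartan_hat_subset_Normalizer_hat by blast
    then obtain k1' where k1': "k1' \<in> G" "hmult k1 k1' = hone"
      using G(1) unfolding closed_subgroup_hat_def by blast
    have "hmult k1' k M' = hmult k1' k1 M'" using k1(3) M(2) by (simp add: hmult_eq)
    then have "hmult k1' k M' = hone M'" using hmult_eq_hone_commute[OF k1'(2)] by simp
    moreover have "hmult k1' k \<in> Normalizer_hat \<delta> \<phi>"
      using G(2) k1'(1) kN by (blast intro: Normalizer_hat_hmult)
    ultimately have "hmult k1' k \<in> G" using kernel by blast
    then have "hmult k1 (hmult k1' k) \<in> G"
      using G(1) k1G unfolding closed_subgroup_hat_def by blast
    then show "k \<in> G"
      using GL2hat_M2hat[OF kGL] by (simp add: hmult_assoc k1'(2) hone_hmult)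
  qed
  then show ?thesis using adelic_level_iff_kernel[OF G] e(1) by simp
qed

theorem mainTheorem5:
  fixes DK f :: int and G :: "(nat \<Rightarrow> m2) set" and M M' :: nat
  assumes "fundamental_discriminant DK" and "DK < 0" and "f \<ge> 1"
    and "DK * f^2 \<noteq> -3" and "DK * f^2 \<noteq> -4"
    and "closed_subgroup_hat G"
    and "G \<subseteq> Normalizer_hat (delta_of DK f) (phi_of DK f)"
    and "M \<ge> 2" and "M' \<ge> 2"
    and "adelic_level (delta_of DK f) (phi_of DK f) G M"
    and "adelic_level (delta_of DK f) (phi_of DK f) G M'"
  shows "(gcd M M' \<ge> 3 \<longrightarrow> adelic_level (delta_of DK f) (phi_of DK f) G (gcd M M'))
       \<and> (gcd M M' = 2 \<longrightarrow> adelic_level (delta_of DK f) (phi_of DK f) G 4)"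
proof -
  have M: "M > 0" "M' > 0" using assms(8,9) by simp_all
  have "adelic_level (delta_of DK f) (phi_of DK f) G e" if "e > 2" "gcd M M' dvd e" for e
    using adelic_level_of_gcd_dvd[OF assms(6,7) M assms(10,11) that] .
  then show ?thesis by auto
qed

end
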